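(* Let $n\ge 3$ and $a\ge 1$ be integers. (i) Every power of a cycle $C_n^a$ is a TRVG. (ii) $D_n^1$ is a TRVG. (iii) If $a\ge 3$ and $n\ge 2a+8$, then $D_n^a$ is not a TRVG. (iv) If $a\ge 2$ and $n\le 2a+4$, then $D_n^a$ is a TRVG.
   Context: A graph $G$ is a transparent rectangle visibility graph (TRVG) if its vertices can be represented by a collection of pairwise non-overlapping rectangles in the plane whose sides are parallel to the coordinate axes, one per vertex, such that two distinct vertices are adjacent if and only if there is a horizontal or a vertical line intersecting the interiors of both of their rectangles (other rectangles do not block visibility). For integers $n\ge 3$, $a\ge 1$, the $a$-th power of the cycle, $C_n^a$, has vertices $v_1,\dots,v_n$, with $v_i$ and $v_j$ ($i\ne j$) adjacent iff their cyclic distance $\min(|i-j|,\,n-|i-j|)$ is at most $a$. $D_n^a$ denotes the complement of $C_n^a$. *)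

theory Defs
  imports Complex_Main
begin

definition ivl_overlap :: "real \<Rightarrow> real \<Rightarrow> real \<Rightarrow> real \<Rightarrow> bool" where
  "ivl_overlap a1 a2 b1 b2 \<longleftrightarrow> a1 < b2 \<and> b1 < a2"

text \<open>A graph with vertex set V and adjacency relation E is a transparent rectangle
  visibility graph if there are axis-parallel rectangles
  [x1 v, x2 v] x [y1 v, y2 v] (nondegenerate), one per vertex, with pairwise disjoint
  interiors, such that distinct vertices u, v are adjacent iff some horizontal line
  (y-projections of interiors overlap) or some vertical line (x-projections of interiors
  overlap) meets the interiors of both rectangles.\<close>
definition TRVG :: "'v set \<Rightarrow> ('v \<Rightarrow> 'v \<Rightarrow> bool) \<Rightarrow> bool" where
  "TRVG V E \<longleftrightarrow> (\<exists>x1 x2 y1 y2 :: 'v \<Rightarrow> real.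
     (\<forall>v\<in>V. x1 v < x2 v \<and> y1 v < y2 v) \<and>
     (\<forall>u\<in>V. \<forall>v\<in>V. u \<noteq> v \<longrightarrow>
        \<not> (ivl_overlap (x1 u) (x2 u) (x1 v) (x2 v) \<and> ivl_overlap (y1 u) (y2 u) (y1 v) (y2 v))) \<and>
     (\<forall>u\<in>V. \<forall>v\<in>V. u \<noteq> v \<longrightarrow>
        (E u v \<longleftrightarrow> ivl_overlap (x1 u) (x2 u) (x1 v) (x2 v) \<or> ivl_overlap (y1 u) (y2 u) (y1 v) (y2 v))))"

text \<open>Cyclic distance on vertices 0..n-1 (vertex v_i is represented by i-1).\<close>
definition cyc_dist :: "nat \<Rightarrow> nat \<Rightarrow> nat \<Rightarrow> nat" where
  "cyc_dist n i j = (let d = (if i \<le> j then j - i else i - j) in min d (n - d))"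

definition cycle_power :: "nat \<Rightarrow> nat \<Rightarrow> nat \<Rightarrow> nat \<Rightarrow> bool" where
  "cycle_power n a i j \<longleftrightarrow> i \<noteq> j \<and> cyc_dist n i j \<le> a"

definition cycle_power_compl :: "nat \<Rightarrow> nat \<Rightarrow> nat \<Rightarrow> nat \<Rightarrow> bool" where
  "cycle_power_compl n a i j \<longleftrightarrow> i \<noteq> j \<and> \<not> cycle_power n a i j"

end

theory Submission
  imports Defs
begin

text \<open>
  Parts (i), (ii) and (iv) are explicit integer layouts of the rectangles, checked pair by pair.
  The obstruction in (iii) is an induced \<open>K\<^sub>4\<^sub>,\<^sub>4\<close>: the vertices \<open>0, \<dots>, 3\<close> and
  \<open>a + 4, \<dots>, a + 7\<close> form two independent sets of \<open>D\<^sub>n\<^sup>a\<close>, completely joined to each other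
  when \<open>a \<ge> 3\<close> and \<open>n \<ge> 2a + 8\<close>. Within each side the rectangles have pairwise disjoint
  \<open>x\<close>-projections and pairwise disjoint \<open>y\<close>-projections. The overlap graph between two families
  of pairwise disjoint intervals is a forest, so fewer than \<open>4 + 4\<close> cross pairs overlap in
  \<open>x\<close> and fewer than \<open>4 + 4\<close> in \<open>y\<close>, which cannot cover all 16 cross pairs.
\<close>

lemma ivl_overlap_sym: "ivl_overlap a1 a2 b1 b2 \<longleftrightarrow> ivl_overlap b1 b2 a1 a2"
  by (auto simp: ivl_overlap_def)

lemma ivl_overlapI: "a1 \<le> c \<Longrightarrow> c < a2 \<Longrightarrow> b1 \<le> c \<Longrightarrow> c < b2 \<Longrightarrow> ivl_overlap a1 a2 b1 b2"
  by (simp add: ivl_overlap_def)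

lemma ivl_overlap_of_int:
  "ivl_overlap (of_int a1) (of_int a2) (of_int b1) (of_int b2) \<longleftrightarrow> a1 < b2 \<and> b1 < a2"
  by (simp add: ivl_overlap_def)

text \<open>Each overlapping pair is charged to its member with the later left end; two pairs charged
  to the same interval would give two overlapping intervals of the other family, and the
  interval with the leftmost left end (taken in \<open>R\<close> if possible) is never charged.\<close>

lemma card_overlapping_pairs_less:
  fixes lo hi :: "'a \<Rightarrow> real"
  assumes finite: "finite L" "finite R" and LR_disjoint: "L \<inter> R = {}" and nonempty: "L \<union> R \<noteq> {}"
    and L_disjoint: "\<And>l l'. l \<in> L \<Longrightarrow> l' \<in> L \<Longrightarrow> l \<noteq> l' \<Longrightarrow> \<not> ivl_overlap (lo l) (hi l) (lo l') (hi l')"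
    and R_disjoint: "\<And>r r'. r \<in> R \<Longrightarrow> r' \<in> R \<Longrightarrow> r \<noteq> r' \<Longrightarrow> \<not> ivl_overlap (lo r) (hi r) (lo r') (hi r')"
  shows "card {(l, r) \<in> L \<times> R. ivl_overlap (lo l) (hi l) (lo r) (hi r)} < card L + card R"
proof -
  define P where "P = {(l, r) \<in> L \<times> R. ivl_overlap (lo l) (hi l) (lo r) (hi r)}"
  define later where "later = (\<lambda>(l, r). if lo r \<le> lo l then l else r)"
  have "inj_on later P"
  proof (rule inj_onI)
    fix p q assume "p \<in> P" "q \<in> P" and later_eq: "later p = later q"
    then obtain l r l' r' where pq: "p = (l, r)" "q = (l', r')" and "l \<in> L" "r \<in> R" "l' \<in> L" "r' \<in> R"
      and overlaps: "lo l < hi r" "lo r < hi l" "lo l' < hi r'" "lo r' < hi l'"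
      unfolding P_def ivl_overlap_def by auto
    show "p = q"
    proof (cases "lo r \<le> lo l")
      case True
      then have "l' = l" "lo r' \<le> lo l'"
        using later_eq LR_disjoint \<open>l \<in> L\<close> \<open>r' \<in> R\<close> by (auto simp: pq later_def split: if_splits)
      then have "ivl_overlap (lo r) (hi r) (lo r') (hi r')"
        using True overlaps by (intro ivl_overlapI[of _ "lo l"]) auto
      then show ?thesis using R_disjoint \<open>r \<in> R\<close> \<open>r' \<in> R\<close> \<open>l' = l\<close> pq by blast
    next
      case False
      then have "r' = r" "\<not> lo r' \<le> lo l'"
        using later_eq LR_disjoint \<open>r \<in> R\<close> \<open>l' \<in> L\<close> by (auto simp: pq later_def split: if_splits)
      then have "ivl_overlap (lo l) (hi l) (lo l') (hi l')"
        using False overlaps by (intro ivl_overlapI[of _ "lo r"]) auto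
      then show ?thesis using L_disjoint \<open>l \<in> L\<close> \<open>l' \<in> L\<close> \<open>r' = r\<close> pq by blast
    qed
  qed
  moreover have "later ` P \<subset> L \<union> R"
  proof -
    obtain m where m: "m \<in> L \<union> R" and least: "\<And>w. w \<in> L \<union> R \<Longrightarrow> lo m \<le> lo w"
      using arg_min_if_finite(1)[of "L \<union> R" lo] arg_min_least[of "L \<union> R" _ lo] finite nonempty by blast
    have "\<exists>w \<in> L \<union> R. w \<notin> later ` P"
    proof (cases "\<exists>r \<in> R. lo r = lo m")
      case True
      then obtain r where "r \<in> R" "lo r = lo m" by blast
      have "later (l, r') \<noteq> r" if "(l, r') \<in> P" for l r'
        using that least[of l] LR_disjoint \<open>r \<in> R\<close> \<open>lo r = lo m\<close>
        by (auto simp: P_def later_def)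
      then have "r \<notin> later ` P" by (metis imageE surj_pair)
      then show ?thesis using \<open>r \<in> R\<close> by blast
    next
      case False
      then have "m \<in> L" using m by blast
      have "later (l, r) \<noteq> m" if "(l, r) \<in> P" for l r
        using that least[of r] False LR_disjoint \<open>m \<in> L\<close>
        by (fastforce simp: P_def later_def)
      then have "m \<notin> later ` P" by (metis imageE surj_pair)
      then show ?thesis using \<open>m \<in> L\<close> by blast
    qed
    moreover have "later ` P \<subseteq> L \<union> R" by (auto simp: P_def later_def)
    ultimately show ?thesis by blast
  qed
  ultimately have "card P < card (L \<union> R)"
    using finite by (metis card_image finite_UnI psubset_card_mono)
  then show ?thesis
    using finite LR_disjoint by (simp add: P_def card_Un_disjoint)
qed

lemma TRVG_induced_complete_bipartite_card:
  assumes "TRVG V E" and "L \<subseteq> V" "R \<subseteq> V" "finite L" "finite R" "L \<inter> R = {}" "L \<union> R \<noteq> {}"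
    and L_independent: "\<And>u v. u \<in> L \<Longrightarrow> v \<in> L \<Longrightarrow> \<not> E u v"
    and R_independent: "\<And>u v. u \<in> R \<Longrightarrow> v \<in> R \<Longrightarrow> \<not> E u v"
    and complete: "\<And>l r. l \<in> L \<Longrightarrow> r \<in> R \<Longrightarrow> E l r"
  shows "card L * card R + 2 \<le> 2 * (card L + card R)"
proof -
  obtain x1 x2 y1 y2 :: "_ \<Rightarrow> real" where adjacent: "\<And>u v. u \<in> V \<Longrightarrow> v \<in> V \<Longrightarrow> u \<noteq> v \<Longrightarrow>
      E u v \<longleftrightarrow> ivl_overlap (x1 u) (x2 u) (x1 v) (x2 v) \<or> ivl_overlap (y1 u) (y2 u) (y1 v) (y2 v)"
    using \<open>TRVG V E\<close> unfolding TRVG_def by metis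
  have separated: "\<not> ivl_overlap (x1 u) (x2 u) (x1 v) (x2 v) \<and> \<not> ivl_overlap (y1 u) (y2 u) (y1 v) (y2 v)"
    if "u \<in> L \<and> v \<in> L \<or> u \<in> R \<and> v \<in> R" "u \<noteq> v" for u v
    using that adjacent[of u v] L_independent R_independent \<open>L \<subseteq> V\<close> \<open>R \<subseteq> V\<close> by blast
  define PX where "PX = {(l, r) \<in> L \<times> R. ivl_overlap (x1 l) (x2 l) (x1 r) (x2 r)}"
  define PY where "PY = {(l, r) \<in> L \<times> R. ivl_overlap (y1 l) (y2 l) (y1 r) (y2 r)}"
  have "card PX < card L + card R"
    unfolding PX_def by (rule card_overlapping_pairs_less) (use assms separated in auto)
  moreover have "card PY < card L + card R"
    unfolding PY_def by (rule card_overlapping_pairs_less) (use assms separated in auto)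
  moreover have "card L * card R \<le> card PX + card PY"
  proof -
    have "(l, r) \<in> PX \<union> PY" if "l \<in> L" "r \<in> R" for l r
      using that complete[OF that] adjacent[of l r] assms by (auto simp: PX_def PY_def)
    then have "L \<times> R \<subseteq> PX \<union> PY" by auto
    moreover have "finite (PX \<union> PY)"
      using \<open>finite L\<close> \<open>finite R\<close> by (auto simp: PX_def PY_def intro: rev_finite_subset[of "L \<times> R"])
    ultimately have "card (L \<times> R) \<le> card (PX \<union> PY)" by (rule card_mono[rotated])
    then show ?thesis using card_Un_le[of PX PY] by (simp add: card_cartesian_product)
  qed
  ultimately show ?thesis by simp
qed

lemma TRVG_int_rectanglesI:
  fixes xlo xhi ylo yhi :: "'v::linorder \<Rightarrow> int"
  assumes nondegenerate: "\<And>v. v \<in> V \<Longrightarrow> xlo v < xhi v \<and> ylo v < yhi v"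
    and "symp E"
    and ordered_pairs: "\<And>u v. u \<in> V \<Longrightarrow> v \<in> V \<Longrightarrow> u < v \<Longrightarrow>
      \<not> (ivl_overlap (xlo u) (xhi u) (xlo v) (xhi v) \<and> ivl_overlap (ylo u) (yhi u) (ylo v) (yhi v)) \<and>
      (E u v \<longleftrightarrow> ivl_overlap (xlo u) (xhi u) (xlo v) (xhi v) \<or> ivl_overlap (ylo u) (yhi u) (ylo v) (yhi v))"
  shows "TRVG V E"
proof -
  let ?P = "\<lambda>u v. u \<in> V \<longrightarrow> v \<in> V \<longrightarrow> u \<noteq> v \<longrightarrow>
      \<not> (ivl_overlap (xlo u) (xhi u) (xlo v) (xhi v) \<and> ivl_overlap (ylo u) (yhi u) (ylo v) (yhi v)) \<and>
      (E u v \<longleftrightarrow> ivl_overlap (xlo u) (xhi u) (xlo v) (xhi v) \<or> ivl_overlap (ylo u) (yhi u) (ylo v) (yhi v))"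
  have "?P u v" for u v
  proof (induction u v rule: linorder_wlog)
    case (le u v)
    then show ?case using ordered_pairs by fastforce
  next
    case (sym u v)
    then show ?case using \<open>symp E\<close> ivl_overlap_sym by (metis sympD)
  qed
  then show ?thesis
    unfolding TRVG_def using nondegenerate
    by (intro exI[of _ "\<lambda>v. real_of_int (xlo v)"] exI[of _ "\<lambda>v. real_of_int (xhi v)"]
        exI[of _ "\<lambda>v. real_of_int (ylo v)"] exI[of _ "\<lambda>v. real_of_int (yhi v)"]) auto
qed

lemma cycle_power_less_iff:
  "u < v \<Longrightarrow> cycle_power n a u v \<longleftrightarrow> v \<le> u + a \<or> n + u \<le> v + a"
  by (auto simp: cycle_power_def cyc_dist_def Let_def)

lemma cycle_power_compl_iff:
  "cycle_power_compl n a u v \<longleftrightarrow>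
     u < v \<and> u + a < v \<and> v + a < n + u \<or> v < u \<and> v + a < u \<and> u + a < n + v"
  by (auto simp: cycle_power_compl_def cycle_power_def cyc_dist_def Let_def)

lemma cycle_power_compl_less_iff:
  "u < v \<Longrightarrow> cycle_power_compl n a u v \<longleftrightarrow> u + a < v \<and> v + a < n + u"
  by (auto simp: cycle_power_compl_iff)

lemma symp_cycle_power: "symp (cycle_power n a)"
  by (auto intro!: sympI simp: cycle_power_def cyc_dist_def Let_def)

lemma symp_cycle_power_compl: "symp (cycle_power_compl n a)"
  by (auto intro!: sympI simp: cycle_power_compl_iff)

text \<open>For \<open>n > 2a\<close>, a vertex \<open>i \<ge> a\<close> sees \<open>i + 1, \<dots>, i + a\<close> through its tall \<open>y\<close>-interval;
  a vertex \<open>i < a\<close> sees them through its wide \<open>x\<close>-interval, and is placed above all other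
  rectangles so that its \<open>y\<close>-interval reaches exactly the wrap-around neighbours \<open>\<ge> n + i - a\<close>.\<close>

lemma TRVG_cycle_power: "TRVG {..<n} (cycle_power n a)"
proof (cases "n \<le> 2 * a")
  case True
  show ?thesis
    by (rule TRVG_int_rectanglesI[where xlo = "\<lambda>_. 0" and xhi = "\<lambda>_. 1" and ylo = int and yhi = "\<lambda>i. int i + 1"])
      (unfold ivl_overlap_of_int, use True in \<open>auto simp: symp_cycle_power cycle_power_less_iff\<close>)
next
  case False
  show ?thesis
    by (rule TRVG_int_rectanglesI[where xlo = int and xhi = "\<lambda>i. if i < a then int (i + a + 1) else int (i + 1)"
          and ylo = "\<lambda>i. if i < a then int (n + i) else int i"
          and yhi = "\<lambda>i. if i < a then int (n + i + 1) else int (i + a + 1)"])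
      (unfold ivl_overlap_of_int, use False in \<open>auto simp: symp_cycle_power cycle_power_less_iff\<close>)
qed

text \<open>Even vertices \<open>v > 0\<close> are horizontal bars starting at \<open>x = -2\<close>, stacked upwards; odd
  vertices are vertical bars reaching below \<open>y = -1\<close>, moving rightwards. The bars of \<open>2p\<close> and
  \<open>2q + 1\<close> cross unless \<open>2q + 1 = 2p \<plusminus> 1\<close>. Where vertex \<open>0\<close> goes depends on the parity of
  \<open>n\<close>; for even \<open>n\<close> it lies below \<open>y = -2\<close>, which is why the bars of \<open>1\<close> and \<open>n - 1\<close> stop there.\<close>

definition cycle_compl_xlo :: "nat \<Rightarrow> nat \<Rightarrow> int" where
  "cycle_compl_xlo n v = (if v = 0 \<and> odd n then -6 else if even v then -2 else 2 * int v + 4)"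

definition cycle_compl_xhi :: "nat \<Rightarrow> nat \<Rightarrow> int" where
  "cycle_compl_xhi n v = (if v = 0 \<and> odd n then -4 else if even v then 2 * int v else 2 * int v + 6)"

definition cycle_compl_ylo :: "nat \<Rightarrow> nat \<Rightarrow> int" where
  "cycle_compl_ylo n v =
    (if v = 0 then (if odd n then 5 else -6)
     else if even v then 2 * int v + 4 else if v = 1 \<or> v + 1 = n then -2 else -4)"

definition cycle_compl_yhi :: "nat \<Rightarrow> nat \<Rightarrow> int" where
  "cycle_compl_yhi n v =
    (if v = 0 then (if odd n then 2 * int n else -3) else if even v then 2 * int v + 6 else 2 * int v)"

lemma TRVG_cycle_compl:
  assumes "3 \<le> n"
  shows "TRVG {..<n} (cycle_power_compl n 1)"
  apply (rule TRVG_int_rectanglesI[where xlo = "cycle_compl_xlo n" and xhi = "cycle_compl_xhi n"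
        and ylo = "cycle_compl_ylo n" and yhi = "cycle_compl_yhi n"])
  subgoal using assms by (auto simp: cycle_compl_xlo_def cycle_compl_xhi_def cycle_compl_ylo_def cycle_compl_yhi_def)
  subgoal by (rule symp_cycle_power_compl)
  subgoal
    using assms unfolding ivl_overlap_of_int
    by (auto simp: cycle_power_compl_less_iff cycle_compl_xlo_def cycle_compl_xhi_def cycle_compl_ylo_def
        cycle_compl_yhi_def; presburger)
  done

lemma not_TRVG_cycle_power_compl:
  assumes "3 \<le> a" "2 * a + 8 \<le> n"
  shows "\<not> TRVG {..<n} (cycle_power_compl n a)"
proof
  assume "TRVG {..<n} (cycle_power_compl n a)"
  then have "card {..<4::nat} * card {a + 4..<a + 8} + 2 \<le> 2 * (card {..<4::nat} + card {a + 4..<a + 8})"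
    by (rule TRVG_induced_complete_bipartite_card) (use assms in \<open>auto simp: cycle_power_compl_iff\<close>)
  then show False by simp
qed

lemma TRVG_cycle_power_compl_if_le_2a_plus_1:
  assumes "n \<le> 2 * a + 1"
  shows "TRVG {..<n} (cycle_power_compl n a)"
  by (rule TRVG_int_rectanglesI[where xlo = int and xhi = "\<lambda>i. int i + 1" and ylo = int and yhi = "\<lambda>i. int i + 1"])
    (unfold ivl_overlap_of_int, use assms in \<open>auto simp: symp_cycle_power_compl cycle_power_compl_less_iff\<close>)

lemma TRVG_cycle_power_compl_2a_plus_2:
  "TRVG {..<2 * a + 2} (cycle_power_compl (2 * a + 2) a)"
  by (rule TRVG_int_rectanglesI[where xlo = "\<lambda>i. if i \<le> a then int i else int i - int a - 1"
        and xhi = "\<lambda>i. if i \<le> a then int i + 1 else int i - int a" and ylo = int and yhi = "\<lambda>i. int i + 1"])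
    (unfold ivl_overlap_of_int, auto simp: symp_cycle_power_compl cycle_power_compl_less_iff)

text \<open>The \<open>x\<close>-projections \<open>zigzag_xlo a i + [0, 3]\<close> overlap exactly along the path
  \<open>a + 1, 0, a + 2, 1, \<dots>, 2a + 1, a, 2a + 2\<close>, whose steps are the differences \<open>a + 1\<close> and \<open>a + 2\<close>.\<close>

definition zigzag_xlo :: "nat \<Rightarrow> nat \<Rightarrow> int" where
  "zigzag_xlo a i = (if i \<le> a then 4 * int i + 2 else 4 * (int i - int a - 1))"

lemma TRVG_cycle_power_compl_2a_plus_3:
  "TRVG {..<2 * a + 3} (cycle_power_compl (2 * a + 3) a)"
  by (rule TRVG_int_rectanglesI[where xlo = "zigzag_xlo a" and xhi = "\<lambda>i. zigzag_xlo a i + 3"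
        and ylo = "\<lambda>i. if i = 2 * a + 2 then int a + 1 else int i"
        and yhi = "\<lambda>i. if i = 2 * a + 2 then int a + 2 else int i + 1"])
    (unfold ivl_overlap_of_int, auto simp: symp_cycle_power_compl cycle_power_compl_less_iff zigzag_xlo_def)

text \<open>For \<open>n = 2a + 4\<close> the \<open>y\<close>-projections realise the edges off the zigzag path:
  \<open>{i, i + a + 3}\<close> for \<open>i \<le> a\<close>, and \<open>{a + 1, 2a + 2}\<close>, \<open>{a + 1, 2a + 3}\<close>, \<open>{a + 2, 2a + 3}\<close>.\<close>

definition chords_ylo :: "nat \<Rightarrow> nat \<Rightarrow> int" where
  "chords_ylo a i =
    (if i < a then 2 * int i
     else if i = a then 2 * int a + 6
     else if i = a + 1 then 2 * int a + 2
     else if i = a + 2 then 2 * int a + 5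
     else if i = 2 * a + 3 then 2 * int a + 4
     else 2 * (int i - int a - 3))"

definition chords_yhi :: "nat \<Rightarrow> nat \<Rightarrow> int" where
  "chords_yhi a i =
    (if i < a then 2 * int i + 1
     else if i = a then 2 * int a + 7
     else if i = a + 1 then 2 * int a + 5
     else if i = a + 2 then 2 * int a + 6
     else if i = 2 * a + 3 then 2 * int a + 7
     else if i = 2 * a + 2 then 2 * int a + 3
     else 2 * (int i - int a - 3) + 1)"

lemma TRVG_cycle_power_compl_2a_plus_4:
  assumes "1 \<le> a"
  shows "TRVG {..<2 * a + 4} (cycle_power_compl (2 * a + 4) a)"
  apply (rule TRVG_int_rectanglesI[where xlo = "zigzag_xlo a" and xhi = "\<lambda>i. zigzag_xlo a i + 3"
        and ylo = "chords_ylo a" and yhi = "chords_yhi a"])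
  subgoal by (auto simp: zigzag_xlo_def chords_ylo_def chords_yhi_def)
  subgoal by (rule symp_cycle_power_compl)
  subgoal premises uv for u v
  proof -
    have classes: "i < a \<or> i = a \<or> i = a + 1 \<or> i = a + 2 \<or> a + 3 \<le> i \<and> i \<le> 2 * a + 2 \<or> i = 2 * a + 3"
      if "i < 2 * a + 4" for i
      using that by linarith
    have "u < 2 * a + 4" "v < 2 * a + 4" using uv by auto
    from classes[OF this(1)] classes[OF this(2)] show ?thesis
      using \<open>u < v\<close> assms
      unfolding ivl_overlap_of_int cycle_power_compl_less_iff[OF \<open>u < v\<close>]
        zigzag_xlo_def chords_ylo_def chords_yhi_def
      by - (elim disjE conjE; auto; arith)
  qed
  done

theorem theorem6:
  fixes n a :: nat
  assumes "n \<ge> 3" and "a \<ge> 1"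
  shows "TRVG {..<n} (cycle_power n a)
    \<and> TRVG {..<n} (cycle_power_compl n 1)
    \<and> (a \<ge> 3 \<and> n \<ge> 2 * a + 8 \<longrightarrow> \<not> TRVG {..<n} (cycle_power_compl n a))
    \<and> (a \<ge> 2 \<and> n \<le> 2 * a + 4 \<longrightarrow> TRVG {..<n} (cycle_power_compl n a))"
proof -
  have "TRVG {..<n} (cycle_power_compl n a)" if small: "n \<le> 2 * a + 4"
  proof -
    consider "n \<le> 2 * a + 1" | "n = 2 * a + 2" | "n = 2 * a + 3" | "n = 2 * a + 4"
      using small by linarith
    then show ?thesis
      by cases (use TRVG_cycle_power_compl_if_le_2a_plus_1 TRVG_cycle_power_compl_2a_plus_2
        TRVG_cycle_power_compl_2a_plus_3 TRVG_cycle_power_compl_2a_plus_4 \<open>a \<ge> 1\<close> in auto)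
  qed
  then show ?thesis
    using TRVG_cycle_power TRVG_cycle_compl not_TRVG_cycle_power_compl \<open>n \<ge> 3\<close> by blast
qed

end
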